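(* Consider the interior permanent magnet synchronous machine with state $x=(i_{s\alpha},i_{s\beta},\omega,\theta)^T$, input $v=(v_{s\alpha},v_{s\beta})^T$, output $y=(i_{s\alpha},i_{s\beta})^T$, given by $$\frac{d}{dt}\Big(L(\theta)\,i_{s\alpha\beta}+\psi_r\begin{bmatrix}\cos\theta\\ \sin\theta\end{bmatrix}\Big)=v-R_s\,i_{s\alpha\beta},\qquad\dot\omega=0,\qquad\dot\theta=\omega,$$ with $L(\theta)=\begin{bmatrix}L_0+L_2\cos2\theta & L_2\sin2\theta\\ L_2\sin2\theta & L_0-L_2\cos2\theta\end{bmatrix}$, $L_d=L_0+L_2>0$, $L_q=L_0-L_2>0$, $L_\Delta=L_d-L_q$, and constants $R_s$, $\psi_r$. Let $\mathcal{O}(x)$ be the $4\times4$ matrix whose rows are the gradients with respect to $x$ of $i_{s\alpha}$, $i_{s\beta}$, $\mathcal{L}_fi_{s\alpha}$, $\mathcal{L}_fi_{s\beta}$. With $i_{sd},i_{sq}$ defined by $\begin{bmatrix}i_{s\alpha}\\ i_{s\beta}\end{bmatrix}=\begin{bmatrix}\cos\theta&-\sin\theta\\ \sin\theta&\cos\theta\end{bmatrix}\begin{bmatrix}i_{sd}\\ i_{sq}\end{bmatrix}$ and $\frac{di_{sd}}{dt},\frac{di_{sq}}{dt}$ their time derivatives along the model, one has $$\det\mathcal{O}(x)=\frac{1}{L_dL_q}\Big[(L_\Delta i_{sd}+\psi_r)^2+L_\Delta^2i_{sq}^2\Big]\omega+\frac{L_\Delta}{L_dL_q}\Big[L_\Delta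 i_{sq}\frac{di_{sd}}{dt}-(L_\Delta i_{sd}+\psi_r)\frac{di_{sq}}{dt}\Big].$$ In particular, for the surface PMSM ($L_2=0$, $L_d=L_q=L_0$): $\det\mathcal{O}=\frac{\psi_r^2}{L_0^2}\omega$; and for the synchronous reluctance machine ($\psi_r=0$): $\det\mathcal{O}=\frac{L_\Delta^2}{L_dL_q}\big[(i_{sd}^2+i_{sq}^2)\omega+\frac{di_{sd}}{dt}i_{sq}-i_{sd}\frac{di_{sq}}{dt}\big]$.
   Context: The Lie derivative $\mathcal{L}_fh$ of an output component $h$ along $\dot x=f(x,u)$ is $\frac{\partial h}{\partial x}f(x,u)$; here $f$ is obtained by solving the flux equation for $\frac{d}{dt}i_{s\alpha\beta}$. *)

theory Defs
  imports "HOL-Analysis.Analysis"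
begin

text \<open>State x = (i_alpha, i_beta, omega, theta) :: real^4, components x$1 .. x$4.
  Input v = (v_alpha, v_beta) :: real^2. Parameters L0 L2 Rs psi.\<close>

definition Lmat :: "real \<Rightarrow> real \<Rightarrow> real \<Rightarrow> real^2^2" where
  "Lmat L0 L2 \<theta> = vector [vector [L0 + L2 * cos (2*\<theta>), L2 * sin (2*\<theta>)],
                             vector [L2 * sin (2*\<theta>), L0 - L2 * cos (2*\<theta>)]]"

definition iab :: "real^4 \<Rightarrow> real^2" where
  "iab x = vector [x$1, x$2]"

definition flux :: "real \<Rightarrow> real \<Rightarrow> real \<Rightarrow> real^4 \<Rightarrow> real^2" where
  "flux L0 L2 \<psi> x = Lmat L0 L2 (x$4) *v iab x + \<psi> *\<^sub>R vector [cos (x$4), sin (x$4)]"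

text \<open>d/dt i_alpha_beta obtained by solving the flux equation
  d/dt flux = v - Rs i, where d/dt flux = D flux(x) applied to xdot = (di, 0, omega).\<close>
definition di :: "real \<Rightarrow> real \<Rightarrow> real \<Rightarrow> real \<Rightarrow> real^4 \<Rightarrow> real^2 \<Rightarrow> real^2" where
  "di L0 L2 Rs \<psi> x v = (THE d. \<exists>D. (flux L0 L2 \<psi> has_derivative D) (at x) \<and>
        D (vector [d$1, d$2, 0, x$3]) = v - Rs *\<^sub>R iab x)"

definition fvec :: "real \<Rightarrow> real \<Rightarrow> real \<Rightarrow> real \<Rightarrow> real^4 \<Rightarrow> real^2 \<Rightarrow> real^4" where
  "fvec L0 L2 Rs \<psi> x v = vector [(di L0 L2 Rs \<psi> x v)$1, (di L0 L2 Rs \<psi> x v)$2, 0, x$3]"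

definition grad :: "(real^4 \<Rightarrow> real) \<Rightarrow> real^4 \<Rightarrow> real^4" where
  "grad h x = (THE g. (h has_derivative (\<lambda>y. g \<bullet> y)) (at x))"

definition lie :: "real \<Rightarrow> real \<Rightarrow> real \<Rightarrow> real \<Rightarrow> (real^4 \<Rightarrow> real) \<Rightarrow> real^2 \<Rightarrow> real^4 \<Rightarrow> real" where
  "lie L0 L2 Rs \<psi> h v x = grad h x \<bullet> fvec L0 L2 Rs \<psi> x v"

definition Obs :: "real \<Rightarrow> real \<Rightarrow> real \<Rightarrow> real \<Rightarrow> real^2 \<Rightarrow> real^4 \<Rightarrow> real^4^4" where
  "Obs L0 L2 Rs \<psi> v x = vector [grad (\<lambda>z. z$1) x, grad (\<lambda>z. z$2) x,
       grad (lie L0 L2 Rs \<psi> (\<lambda>z. z$1) v) x, grad (lie L0 L2 Rs \<psi> (\<lambda>z. z$2) v) x]"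

text \<open>dq currents: i_ab = rot(theta) i_dq.\<close>
definition isd :: "real^4 \<Rightarrow> real" where
  "isd x = cos (x$4) * x$1 + sin (x$4) * x$2"
definition isq :: "real^4 \<Rightarrow> real" where
  "isq x = - sin (x$4) * x$1 + cos (x$4) * x$2"

end

theory Submission
  imports Defs
begin

text \<open>
  The first two rows of the observability matrix are unit vectors, so its determinant is the
  Jacobian of the current rate \<open>f = di/dt\<close> with respect to \<open>(\<omega>, \<theta>)\<close>. Solving the flux equation
  gives \<open>f = L(\<theta>)\<^sup>-\<^sup>1 (v - R\<^sub>s i - \<omega> a)\<close> with \<open>a = \<partial>\<^sub>\<theta>(flux)\<close>, and differentiating shows that the
  two columns of that Jacobian are \<open>-L\<^sup>-\<^sup>1 a\<close> and \<open>-L\<^sup>-\<^sup>1 a'\<close>, where \<open>a' = L'(\<theta>) f + \<omega> \<partial>\<^sub>\<theta> a\<close> is the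
  time derivative of \<open>a\<close> along the model. Hence the determinant is the cross product
  \<open>a \<times> a'\<close> divided by \<open>det L = L\<^sub>d L\<^sub>q\<close>. The cross product is invariant under rotations, and in the
  dq-frame \<open>a\<close> has the components \<open>(L\<^sub>\<Delta> i\<^sub>s\<^sub>q, L\<^sub>\<Delta> i\<^sub>s\<^sub>d + \<psi>\<^sub>r)\<close>, which gives the formula.
\<close>

lemma det_4:
  "det (A::'a::comm_ring_1^4^4) =
      A$1$1 * A$2$2 * A$3$3 * A$4$4 - A$1$1 * A$2$2 * A$3$4 * A$4$3
    - A$1$1 * A$2$3 * A$3$2 * A$4$4 + A$1$1 * A$2$3 * A$3$4 * A$4$2
    + A$1$1 * A$2$4 * A$3$2 * A$4$3 - A$1$1 * A$2$4 * A$3$3 * A$4$2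
    - A$1$2 * A$2$1 * A$3$3 * A$4$4 + A$1$2 * A$2$1 * A$3$4 * A$4$3
    + A$1$2 * A$2$3 * A$3$1 * A$4$4 - A$1$2 * A$2$3 * A$3$4 * A$4$1
    - A$1$2 * A$2$4 * A$3$1 * A$4$3 + A$1$2 * A$2$4 * A$3$3 * A$4$1
    + A$1$3 * A$2$1 * A$3$2 * A$4$4 - A$1$3 * A$2$1 * A$3$4 * A$4$2
    - A$1$3 * A$2$2 * A$3$1 * A$4$4 + A$1$3 * A$2$2 * A$3$4 * A$4$1
    + A$1$3 * A$2$4 * A$3$1 * A$4$2 - A$1$3 * A$2$4 * A$3$2 * A$4$1
    - A$1$4 * A$2$1 * A$3$2 * A$4$3 + A$1$4 * A$2$1 * A$3$3 * A$4$2
    + A$1$4 * A$2$2 * A$3$1 * A$4$3 - A$1$4 * A$2$2 * A$3$3 * A$4$1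
    - A$1$4 * A$2$3 * A$3$1 * A$4$2 + A$1$4 * A$2$3 * A$3$2 * A$4$1"
proof -
  have f1234: "finite {2::4, 3, 4}" "1 \<notin> {2::4, 3, 4}" by auto
  have f234: "finite {3::4, 4}" "2 \<notin> {3::4, 4}" by auto
  have f34: "finite {4::4}" "3 \<notin> {4::4}" by auto
  show ?thesis
    unfolding det_def UNIV_4
    unfolding sum_over_permutations_insert[OF f1234]
    unfolding sum_over_permutations_insert[OF f234]
    unfolding sum_over_permutations_insert[OF f34]
    unfolding permutes_sing
    by (simp add: sign_swap_id permutation_swap_id permutation_compose sign_compose sign_id
        swap_id_eq algebra_simps)
qed

lemma det_4_unit_rows:
  fixes A :: "'a::comm_ring_1^4^4"
  assumes "A$1 = axis 1 1" and "A$2 = axis 2 1"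
  shows "det A = A$3$3 * A$4$4 - A$3$4 * A$4$3"
  unfolding det_4 by (simp add: assms axis_def)

lemma linear_eq_inner_axis:
  fixes D :: "real^'n \<Rightarrow> real"
  assumes "linear D"
  shows "D y = (\<chi> k. D (axis k 1)) \<bullet> y"
proof -
  have "D y = D (\<Sum>i\<in>UNIV. y$i *\<^sub>R axis i 1)"
    using basis_expansion[of y] by (simp add: scalar_mult_eq_scaleR)
  also have "\<dots> = (\<Sum>i\<in>UNIV. y$i * D (axis i 1))"
    by (simp add: linear_sum[OF assms] linear_scale[OF assms])
  also have "\<dots> = (\<chi> k. D (axis k 1)) \<bullet> y"
    by (simp add: inner_vec_def mult.commute)
  finally show ?thesis .
qed

lemma grad_eq:
  assumes "(h has_derivative D) (at x)"
  shows "grad h x = (\<chi> k. D (axis k 1))"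
  unfolding grad_def
proof (rule the_equality)
  have "(\<lambda>y. (\<chi> k. D (axis k 1)) \<bullet> y) = D"
    by (rule ext, rule linear_eq_inner_axis[OF has_derivative_linear[OF assms], symmetric])
  then show "(h has_derivative (\<lambda>y. (\<chi> k. D (axis k 1)) \<bullet> y)) (at x)"
    using assms by simp
next
  fix g assume "(h has_derivative (\<lambda>y. g \<bullet> y)) (at x)"
  then have "(\<lambda>y. g \<bullet> y) = D" using assms by (rule has_derivative_unique)
  then show "g = (\<chi> k. D (axis k 1))" by (auto simp: vec_eq_iff inner_axis)
qed

lemma has_derivative_at_ex_iff:
  assumes "(f has_derivative F) (at x)"
  shows "(\<exists>D. (f has_derivative D) (at x) \<and> P D) \<longleftrightarrow> P F"
proof
  assume "\<exists>D. (f has_derivative D) (at x) \<and> P D"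
  then obtain D where "(f has_derivative D) (at x)" "P D" by blast
  moreover from this(1) assms have "D = F" by (rule has_derivative_unique)
  ultimately show "P F" by simp
qed (use assms in blast)

lemma has_derivative_vec_nth [derivative_intros]: "((\<lambda>z. z $ i) has_derivative (\<lambda>h. h $ i)) F"
  by (rule bounded_linear_imp_has_derivative) (rule bounded_linear_vec_nth)

lemma grad_vec_nth: "grad (\<lambda>z. z $ k) x = axis k 1"
  by (simp add: grad_eq[OF has_derivative_vec_nth] vec_eq_iff axis_def)

lemma vector_4 [simp]:
  "(vector [a, b, c, d] :: 'a::zero^4) $ 1 = a"
  "(vector [a, b, c, d] :: 'a::zero^4) $ 2 = b"
  "(vector [a, b, c, d] :: 'a::zero^4) $ 3 = c"
  "(vector [a, b, c, d] :: 'a::zero^4) $ 4 = d"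
  unfolding vector_def by simp_all

lemma isd_has_derivative:
  "(isd has_derivative (\<lambda>h. cos (z$4) * h$1 + sin (z$4) * h$2 + h$4 * isq z)) (at z)"
  unfolding isd_def[abs_def] isq_def
  by (rule has_derivative_eq_rhs, (rule derivative_intros)+) (auto simp: fun_eq_iff algebra_simps)

lemma isq_has_derivative:
  "(isq has_derivative (\<lambda>h. - sin (z$4) * h$1 + cos (z$4) * h$2 - h$4 * isd z)) (at z)"
  unfolding isq_def[abs_def] isd_def
  by (rule has_derivative_eq_rhs, (rule derivative_intros)+) (auto simp: fun_eq_iff algebra_simps)

lemma inductance_system_iff:
  fixes L0 L2 c s w1 w2 d1 d2 :: real
  assumes sc: "s\<^sup>2 + c\<^sup>2 = 1" and nondeg: "L0\<^sup>2 \<noteq> L2\<^sup>2"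
  shows "(L0 + L2 * c) * d1 + L2 * s * d2 = w1 \<and> L2 * s * d1 + (L0 - L2 * c) * d2 = w2 \<longleftrightarrow>
         d1 = ((L0 - L2 * c) * w1 - L2 * s * w2) / (L0\<^sup>2 - L2\<^sup>2) \<and>
         d2 = (- L2 * s * w1 + (L0 + L2 * c) * w2) / (L0\<^sup>2 - L2\<^sup>2)"
    (is "?system \<longleftrightarrow> d1 = ?X / ?det \<and> d2 = ?Y / ?det")
proof
  assume ?system
  then have w: "w1 = (L0 + L2 * c) * d1 + L2 * s * d2" "w2 = L2 * s * d1 + (L0 - L2 * c) * d2"
    by simp_all
  have "?X = (L0\<^sup>2 - L2\<^sup>2 * (s\<^sup>2 + c\<^sup>2)) * d1" "?Y = (L0\<^sup>2 - L2\<^sup>2 * (s\<^sup>2 + c\<^sup>2)) * d2"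
    unfolding w by (simp_all add: algebra_simps power2_eq_square)
  then show "d1 = ?X / ?det \<and> d2 = ?Y / ?det"
    using nondeg unfolding sc by simp
next
  assume "d1 = ?X / ?det \<and> d2 = ?Y / ?det"
  then have d: "d1 = ?X / ?det" "d2 = ?Y / ?det" by simp_all
  have "(L0 + L2 * c) * ?X + L2 * s * ?Y = (L0\<^sup>2 - L2\<^sup>2 * (s\<^sup>2 + c\<^sup>2)) * w1"
    "L2 * s * ?X + (L0 - L2 * c) * ?Y = (L0\<^sup>2 - L2\<^sup>2 * (s\<^sup>2 + c\<^sup>2)) * w2"
    by (simp_all add: algebra_simps power2_eq_square)
  then show ?system
    using nondeg unfolding sc d times_divide_eq_right add_divide_distrib[symmetric] by simp
qed

context
  fixes L0 L2 Rs \<psi> :: real and v :: "real^2"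
  assumes nondeg: "L0\<^sup>2 \<noteq> L2\<^sup>2"
begin

definition flux_theta1 :: "real^4 \<Rightarrow> real" where
  "flux_theta1 z = - 2*L2 * sin (2*z$4) * z$1 + 2*L2 * cos (2*z$4) * z$2 - \<psi> * sin (z$4)"
definition flux_theta2 :: "real^4 \<Rightarrow> real" where
  "flux_theta2 z = 2*L2 * cos (2*z$4) * z$1 + 2*L2 * sin (2*z$4) * z$2 + \<psi> * cos (z$4)"
definition flux_theta_theta1 :: "real^4 \<Rightarrow> real" where
  "flux_theta_theta1 z = - 4*L2 * cos (2*z$4) * z$1 - 4*L2 * sin (2*z$4) * z$2 - \<psi> * cos (z$4)"
definition flux_theta_theta2 :: "real^4 \<Rightarrow> real" where
  "flux_theta_theta2 z = - 4*L2 * sin (2*z$4) * z$1 + 4*L2 * cos (2*z$4) * z$2 - \<psi> * sin (z$4)"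

definition inductive_voltage1 :: "real^4 \<Rightarrow> real" where
  "inductive_voltage1 z = v$1 - Rs * z$1 - z$3 * flux_theta1 z"
definition inductive_voltage2 :: "real^4 \<Rightarrow> real" where
  "inductive_voltage2 z = v$2 - Rs * z$2 - z$3 * flux_theta2 z"

text \<open>\<open>current_rate\<close> is \<open>L(\<theta>)\<^sup>-\<^sup>1\<close> applied to the inductive voltage, via the adjugate and
  \<open>det L(\<theta>) = L0\<^sup>2 - L2\<^sup>2\<close>.\<close>

definition current_rate1 :: "real^4 \<Rightarrow> real" where
  "current_rate1 z = ((L0 - L2 * cos (2*z$4)) * inductive_voltage1 z - L2 * sin (2*z$4) * inductive_voltage2 z)
                     / (L0\<^sup>2 - L2\<^sup>2)"
definition current_rate2 :: "real^4 \<Rightarrow> real" where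
  "current_rate2 z = (- L2 * sin (2*z$4) * inductive_voltage1 z + (L0 + L2 * cos (2*z$4)) * inductive_voltage2 z)
                     / (L0\<^sup>2 - L2\<^sup>2)"

definition current_rate1_domega :: "real^4 \<Rightarrow> real" where
  "current_rate1_domega z = - ((L0 - L2 * cos (2*z$4)) * flux_theta1 z - L2 * sin (2*z$4) * flux_theta2 z)
                            / (L0\<^sup>2 - L2\<^sup>2)"
definition current_rate2_domega :: "real^4 \<Rightarrow> real" where
  "current_rate2_domega z = - (- L2 * sin (2*z$4) * flux_theta1 z + (L0 + L2 * cos (2*z$4)) * flux_theta2 z)
                            / (L0\<^sup>2 - L2\<^sup>2)"
definition current_rate1_dtheta :: "real^4 \<Rightarrow> real" where
  "current_rate1_dtheta z = (2*L2 * sin (2*z$4) * inductive_voltage1 z - 2*L2 * cos (2*z$4) * inductive_voltage2 z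
      - z$3 * ((L0 - L2 * cos (2*z$4)) * flux_theta_theta1 z - L2 * sin (2*z$4) * flux_theta_theta2 z))
      / (L0\<^sup>2 - L2\<^sup>2)"
definition current_rate2_dtheta :: "real^4 \<Rightarrow> real" where
  "current_rate2_dtheta z = (- 2*L2 * cos (2*z$4) * inductive_voltage1 z - 2*L2 * sin (2*z$4) * inductive_voltage2 z
      - z$3 * (- L2 * sin (2*z$4) * flux_theta_theta1 z + (L0 + L2 * cos (2*z$4)) * flux_theta_theta2 z))
      / (L0\<^sup>2 - L2\<^sup>2)"

definition flux_derivative :: "real^4 \<Rightarrow> real^4 \<Rightarrow> real^2" where
  "flux_derivative z h =
     ((L0 + L2 * cos (2*z$4)) * h$1 + L2 * sin (2*z$4) * h$2 + h$4 * flux_theta1 z) *\<^sub>R axis 1 1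
   + (L2 * sin (2*z$4) * h$1 + (L0 - L2 * cos (2*z$4)) * h$2 + h$4 * flux_theta2 z) *\<^sub>R axis 2 1"

lemma flux_has_derivative: "(flux L0 L2 \<psi> has_derivative flux_derivative z) (at z)"
proof -
  have flux_eq: "flux L0 L2 \<psi> = (\<lambda>z.
      ((L0 + L2 * cos (2*z$4)) * z$1 + L2 * sin (2*z$4) * z$2 + \<psi> * cos (z$4)) *\<^sub>R axis 1 1
    + (L2 * sin (2*z$4) * z$1 + (L0 - L2 * cos (2*z$4)) * z$2 + \<psi> * sin (z$4)) *\<^sub>R axis 2 1)"
    by (simp add: fun_eq_iff vec_eq_iff forall_2 flux_def Lmat_def iab_def matrix_vector_mult_def
        sum_2 axis_def)
  show ?thesis
    unfolding flux_eq flux_derivative_def flux_theta1_def flux_theta2_def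
    by (rule has_derivative_eq_rhs, (rule derivative_intros)+) (auto simp: fun_eq_iff algebra_simps)
qed

lemma di_eq: "di L0 L2 Rs \<psi> z v = vector [current_rate1 z, current_rate2 z]"
proof -
  have "flux_derivative z (vector [d$1, d$2, 0, z$3]) = v - Rs *\<^sub>R iab z
        \<longleftrightarrow> d = vector [current_rate1 z, current_rate2 z]" for d :: "real^2"
  proof -
    have "flux_derivative z (vector [d$1, d$2, 0, z$3]) = v - Rs *\<^sub>R iab z
        \<longleftrightarrow> (L0 + L2 * cos (2*z$4)) * d$1 + L2 * sin (2*z$4) * d$2 = inductive_voltage1 z \<and>
            L2 * sin (2*z$4) * d$1 + (L0 - L2 * cos (2*z$4)) * d$2 = inductive_voltage2 z"
      by (auto simp: vec_eq_iff forall_2 flux_derivative_def iab_def inductive_voltage1_def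
          inductive_voltage2_def axis_def algebra_simps)
    also have "\<dots> \<longleftrightarrow> d = vector [current_rate1 z, current_rate2 z]"
      unfolding inductance_system_iff[OF sin_cos_squared_add nondeg] current_rate1_def current_rate2_def
      by (auto simp: vec_eq_iff forall_2)
    finally show ?thesis .
  qed
  then show ?thesis
    unfolding di_def has_derivative_at_ex_iff[OF flux_has_derivative] by simp
qed

lemma fvec_eq: "fvec L0 L2 Rs \<psi> z v = vector [current_rate1 z, current_rate2 z, 0, z$3]"
  by (simp add: fvec_def di_eq)

lemma lie_vec_nth:
  "lie L0 L2 Rs \<psi> (\<lambda>z. z$1) v = current_rate1"
  "lie L0 L2 Rs \<psi> (\<lambda>z. z$2) v = current_rate2"
  by (simp_all add: fun_eq_iff lie_def grad_vec_nth fvec_eq inner_axis')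

lemma lie_isd: "lie L0 L2 Rs \<psi> isd v z = cos (z$4) * current_rate1 z + sin (z$4) * current_rate2 z + z$3 * isq z"
  by (simp add: lie_def grad_eq[OF isd_has_derivative] fvec_eq inner_vec_def sum_4 axis_def)

lemma lie_isq: "lie L0 L2 Rs \<psi> isq v z = - sin (z$4) * current_rate1 z + cos (z$4) * current_rate2 z - z$3 * isd z"
  by (simp add: lie_def grad_eq[OF isq_has_derivative] fvec_eq inner_vec_def sum_4 axis_def)

lemma grad_current_rate1:
  "grad current_rate1 z $ 3 = current_rate1_domega z" "grad current_rate1 z $ 4 = current_rate1_dtheta z"
proof -
  have "\<exists>D. (current_rate1 has_derivative D) (at z) \<and>
     D (axis 3 1) = current_rate1_domega z \<and> D (axis 4 1) = current_rate1_dtheta z"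
    unfolding current_rate1_def[abs_def] inductive_voltage1_def[abs_def] inductive_voltage2_def[abs_def]
      flux_theta1_def[abs_def] flux_theta2_def[abs_def]
    by (rule exI, rule conjI, (rule derivative_intros)+)
       (use nondeg in \<open>simp_all add: axis_def current_rate1_domega_def current_rate1_dtheta_def
          flux_theta_theta1_def flux_theta_theta2_def flux_theta1_def flux_theta2_def
          inductive_voltage1_def inductive_voltage2_def field_simps\<close>)
  then show "grad current_rate1 z $ 3 = current_rate1_domega z" "grad current_rate1 z $ 4 = current_rate1_dtheta z"
    by (auto simp: grad_eq)
qed

lemma grad_current_rate2:
  "grad current_rate2 z $ 3 = current_rate2_domega z" "grad current_rate2 z $ 4 = current_rate2_dtheta z"
proof -
  have "\<exists>D. (current_rate2 has_derivative D) (at z) \<and>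
     D (axis 3 1) = current_rate2_domega z \<and> D (axis 4 1) = current_rate2_dtheta z"
    unfolding current_rate2_def[abs_def] inductive_voltage1_def[abs_def] inductive_voltage2_def[abs_def]
      flux_theta1_def[abs_def] flux_theta2_def[abs_def]
    by (rule exI, rule conjI, (rule derivative_intros)+)
       (use nondeg in \<open>simp_all add: axis_def current_rate2_domega_def current_rate2_dtheta_def
          flux_theta_theta1_def flux_theta_theta2_def flux_theta1_def flux_theta2_def
          inductive_voltage1_def inductive_voltage2_def field_simps\<close>)
  then show "grad current_rate2 z $ 3 = current_rate2_domega z" "grad current_rate2 z $ 4 = current_rate2_dtheta z"
    by (auto simp: grad_eq)
qed

text \<open>Time derivative of \<open>flux_theta\<close> along a trajectory with \<open>di/dt = (f1, f2)\<close> and \<open>d\<theta>/dt = \<omega>\<close>.\<close>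

definition flux_theta_dt1 :: "real^4 \<Rightarrow> real \<Rightarrow> real \<Rightarrow> real" where
  "flux_theta_dt1 z f1 f2 = 2*L2 * (- sin (2*z$4) * f1 + cos (2*z$4) * f2) + z$3 * flux_theta_theta1 z"
definition flux_theta_dt2 :: "real^4 \<Rightarrow> real \<Rightarrow> real \<Rightarrow> real" where
  "flux_theta_dt2 z f1 f2 = 2*L2 * (cos (2*z$4) * f1 + sin (2*z$4) * f2) + z$3 * flux_theta_theta2 z"

lemma current_rate_dtheta_eq:
  "current_rate1_dtheta z = - ((L0 - L2 * cos (2*z$4)) * flux_theta_dt1 z (current_rate1 z) (current_rate2 z)
       - L2 * sin (2*z$4) * flux_theta_dt2 z (current_rate1 z) (current_rate2 z)) / (L0\<^sup>2 - L2\<^sup>2)"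
  "current_rate2_dtheta z = - (- L2 * sin (2*z$4) * flux_theta_dt1 z (current_rate1 z) (current_rate2 z)
       + (L0 + L2 * cos (2*z$4)) * flux_theta_dt2 z (current_rate1 z) (current_rate2 z)) / (L0\<^sup>2 - L2\<^sup>2)"
proof -
  \<comment> \<open>keeps \<open>L0\<^sup>2 - L2\<^sup>2\<close> atomic, so that \<open>field_simps\<close> can clear it\<close>
  define d where "d = L0\<^sup>2 - L2\<^sup>2"
  have d: "d \<noteq> 0" using nondeg by (simp add: d_def)
  note defs = current_rate1_dtheta_def current_rate2_dtheta_def flux_theta_dt1_def flux_theta_dt2_def
    current_rate1_def current_rate2_def d_def[symmetric]
  show "current_rate1_dtheta z = - ((L0 - L2 * cos (2*z$4)) * flux_theta_dt1 z (current_rate1 z) (current_rate2 z)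
       - L2 * sin (2*z$4) * flux_theta_dt2 z (current_rate1 z) (current_rate2 z)) / (L0\<^sup>2 - L2\<^sup>2)"
    unfolding defs using d
    by (simp add: field_simps) (unfold d_def; use sin_cos_squared_add[of "2*z$4"] in algebra)
  show "current_rate2_dtheta z = - (- L2 * sin (2*z$4) * flux_theta_dt1 z (current_rate1 z) (current_rate2 z)
       + (L0 + L2 * cos (2*z$4)) * flux_theta_dt2 z (current_rate1 z) (current_rate2 z)) / (L0\<^sup>2 - L2\<^sup>2)"
    unfolding defs using d
    by (simp add: field_simps) (unfold d_def; use sin_cos_squared_add[of "2*z$4"] in algebra)
qed

lemma flux_theta_cross_dq:
  "flux_theta1 z * flux_theta_dt2 z f1 f2 - flux_theta2 z * flux_theta_dt1 z f1 f2
   = ((2*L2 * isd z + \<psi>)\<^sup>2 + (2*L2)\<^sup>2 * (isq z)\<^sup>2) * z$3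
     + 2*L2 * (2*L2 * isq z * (cos (z$4) * f1 + sin (z$4) * f2 + z$3 * isq z)
               - (2*L2 * isd z + \<psi>) * (- sin (z$4) * f1 + cos (z$4) * f2 - z$3 * isd z))"
proof -
  have "(sin (z$4))\<^sup>2 + (cos (z$4))\<^sup>2 = 1" by simp
  then show ?thesis
    unfolding flux_theta1_def flux_theta2_def flux_theta_dt1_def flux_theta_dt2_def
      flux_theta_theta1_def flux_theta_theta2_def isd_def isq_def sin_double cos_double
    by algebra
qed

lemma current_rate_jacobian_eq_cross:
  "current_rate1_domega z * current_rate2_dtheta z - current_rate1_dtheta z * current_rate2_domega z
   = (flux_theta1 z * flux_theta_dt2 z (current_rate1 z) (current_rate2 z)
      - flux_theta2 z * flux_theta_dt1 z (current_rate1 z) (current_rate2 z)) / (L0\<^sup>2 - L2\<^sup>2)"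
proof -
  define d where "d = L0\<^sup>2 - L2\<^sup>2"
  have "d \<noteq> 0" using nondeg by (simp add: d_def)
  then show ?thesis
    unfolding current_rate_dtheta_eq current_rate1_domega_def current_rate2_domega_def d_def[symmetric]
    by (simp add: field_simps) (unfold d_def; use sin_cos_squared_add[of "2*z$4"] in algebra)
qed

lemma det_Obs_eq_jacobian:
  "det (Obs L0 L2 Rs \<psi> v x)
   = current_rate1_domega x * current_rate2_dtheta x - current_rate1_dtheta x * current_rate2_domega x"
proof -
  have "Obs L0 L2 Rs \<psi> v x $ 1 = axis 1 1" "Obs L0 L2 Rs \<psi> v x $ 2 = axis 2 1"
    by (simp_all add: Obs_def grad_vec_nth)
  then have "det (Obs L0 L2 Rs \<psi> v x) = Obs L0 L2 Rs \<psi> v x $3$3 * Obs L0 L2 Rs \<psi> v x $4$4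
                                         - Obs L0 L2 Rs \<psi> v x $3$4 * Obs L0 L2 Rs \<psi> v x $4$3"
    by (rule det_4_unit_rows)
  moreover have "Obs L0 L2 Rs \<psi> v x $ 3 = grad current_rate1 x"
    "Obs L0 L2 Rs \<psi> v x $ 4 = grad current_rate2 x"
    by (simp_all add: Obs_def lie_vec_nth)
  ultimately show ?thesis
    by (simp add: grad_current_rate1 grad_current_rate2)
qed

lemma det_Obs_dq:
  "det (Obs L0 L2 Rs \<psi> v x)
   = 1 / (L0\<^sup>2 - L2\<^sup>2) * ((2*L2 * isd x + \<psi>)\<^sup>2 + (2*L2)\<^sup>2 * (isq x)\<^sup>2) * x$3
     + 2*L2 / (L0\<^sup>2 - L2\<^sup>2) * (2*L2 * isq x * lie L0 L2 Rs \<psi> isd v x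
                                  - (2*L2 * isd x + \<psi>) * lie L0 L2 Rs \<psi> isq v x)"
  unfolding det_Obs_eq_jacobian current_rate_jacobian_eq_cross flux_theta_cross_dq lie_isd lie_isq
  by (simp add: add_divide_distrib diff_divide_distrib distrib_right)

end

theorem mainTheorem4:
  fixes L0 L2 Rs \<psi> :: real and x :: "real^4" and v :: "real^2"
  assumes "L0 + L2 > 0" and "L0 - L2 > 0"
  shows "let Ld = L0 + L2; Lq = L0 - L2; L\<Delta> = Ld - Lq;
             \<omega> = x$3; id = isd x; iq = isq x;
             did = lie L0 L2 Rs \<psi> isd v x; diq = lie L0 L2 Rs \<psi> isq v x;
             dO = det (Obs L0 L2 Rs \<psi> v x)
         in dO = 1 / (Ld * Lq) * ((L\<Delta> * id + \<psi>)\<^sup>2 + L\<Delta>\<^sup>2 * iq\<^sup>2) * \<omega>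
                 + L\<Delta> / (Ld * Lq) * (L\<Delta> * iq * did - (L\<Delta> * id + \<psi>) * diq)
            \<and> (L2 = 0 \<longrightarrow> dO = \<psi>\<^sup>2 / L0\<^sup>2 * \<omega>)
            \<and> (\<psi> = 0 \<longrightarrow> dO = L\<Delta>\<^sup>2 / (Ld * Lq) * ((id\<^sup>2 + iq\<^sup>2) * \<omega> + did * iq - id * diq))"
proof -
  have LdLq: "(L0 + L2) * (L0 - L2) = L0\<^sup>2 - L2\<^sup>2" by (simp add: power2_eq_square algebra_simps)
  have "(L0 + L2) * (L0 - L2) > 0" using assms by simp
  then have nondeg: "L0\<^sup>2 \<noteq> L2\<^sup>2" unfolding LdLq by simp
  note det = det_Obs_dq[OF nondeg, of Rs \<psi> v x]
  have L\<Delta>: "(L0 + L2) - (L0 - L2) = 2 * L2" by simp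
  show ?thesis
    unfolding Let_def LdLq L\<Delta> det by (auto simp: power2_eq_square divide_inverse algebra_simps)
qed

end
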